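(* For every integer $n\ge2$, \[ Q_n(x)=\left(\frac{1+\sqrt{5+4x}}2\right)^n+\left(\frac{1-\sqrt{5+4x}}2\right)^n . \]
   Context: For $n\ge1$ let $\Xi_n$ be the poset on $\{x_1,\dots,x_n\}$ whose cover relations are exactly: $x_2\prec x_1$, $x_3\prec x_2$, and for $3\le i\le n-1$, $x_i\prec x_{i+1}$ if $i$ is odd and $x_{i+1}\prec x_i$ if $i$ is even (so $x_1>x_2>x_3<x_4>x_5<\cdots$). A filter of a poset is an up-closed subset. The matchable Lucas cube $\Omega_n$ is the graph whose vertices are the filters of $\Xi_n$, two filters adjacent iff one is obtained from the other by deleting a single element. $q_{n,k}$ denotes the number of induced subgraphs of $\Omega_n$ isomorphic to the $k$-dimensional hypercube, and $Q_n(x)=\sum_{k\ge0}q_{n,k}x^k$ is the cube polynomial of $\Omega_n$. *)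

theory Defs
  imports Complex_Main
begin

text \<open>Cover relations of the poset Xi_n on the elements x_1,...,x_n (encoded as the
naturals 1..n).  xi_cover n a b means x_a is covered by x_b, i.e. x_a \<prec> x_b.\<close>
definition xi_cover :: "nat \<Rightarrow> nat \<Rightarrow> nat \<Rightarrow> bool" where
  "xi_cover n a b \<longleftrightarrow>
     (n \<ge> 2 \<and> a = 2 \<and> b = 1) \<or>
     (n \<ge> 3 \<and> a = 3 \<and> b = 2) \<or>
     (\<exists>i. 3 \<le> i \<and> i \<le> n - 1 \<and>
        ((odd i \<and> a = i \<and> b = Suc i) \<or> (even i \<and> a = Suc i \<and> b = i)))"

definition xi_le :: "nat \<Rightarrow> nat \<Rightarrow> nat \<Rightarrow> bool" where
  "xi_le n a b \<longleftrightarrow> a \<in> {1..n} \<and> b \<in> {1..n} \<and> (xi_cover n)\<^sup>*\<^sup>* a b"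

definition xi_filters :: "nat \<Rightarrow> nat set set" where
  "xi_filters n = {F. F \<subseteq> {1..n} \<and> (\<forall>a\<in>F. \<forall>b. xi_le n a b \<longrightarrow> b \<in> F)}"

definition omega_adj :: "nat \<Rightarrow> nat set \<Rightarrow> nat set \<Rightarrow> bool" where
  "omega_adj n F G \<longleftrightarrow> F \<in> xi_filters n \<and> G \<in> xi_filters n \<and>
     ((\<exists>x\<in>F. G = F - {x}) \<or> (\<exists>x\<in>G. F = G - {x}))"

definition induces_cube :: "nat \<Rightarrow> nat \<Rightarrow> nat set set \<Rightarrow> bool" where
  "induces_cube n k S \<longleftrightarrow> S \<subseteq> xi_filters n \<and>
     (\<exists>f. bij_betw f (Pow {..<k}) S \<and>
        (\<forall>A\<in>Pow {..<k}. \<forall>B\<in>Pow {..<k}.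
            omega_adj n (f A) (f B) \<longleftrightarrow> card ((A - B) \<union> (B - A)) = 1))"

definition q_count :: "nat \<Rightarrow> nat \<Rightarrow> nat" where
  "q_count n k = card {S. induces_cube n k S}"

text \<open>Cube polynomial; q_count n k = 0 once 2^k exceeds the number of vertices,
so summing up to the number of vertices covers all nonzero terms.\<close>
definition cube_poly :: "nat \<Rightarrow> complex \<Rightarrow> complex" where
  "cube_poly n x = (\<Sum>k\<le>card (xi_filters n). of_nat (q_count n k) * x ^ k)"

end

theory Submission
  imports Defs
begin

text \<open>
  In a graph whose vertices are sets, two of them adjacent when they differ in exactly one
  element, an induced \<open>k\<close>-cube is a family \<open>{F \<union> D | D \<subseteq> C}\<close> with \<open>F \<inter> C = {}\<close> and
  \<open>card C = k\<close>: an embedding of the hypercube is determined by its base vertex and the \<open>k\<close>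
  elements labelling the edges there, because a common neighbour of two neighbours of a vertex
  \<open>X\<close> is either \<open>X\<close> or the fourth vertex of their square. In \<open>\<Omega>\<^sub>n\<close> all these sets must be
  filters of \<open>\<Xi>\<^sub>n\<close>, which amounts to \<open>b \<in> F\<close> for every cover \<open>x\<^sub>a \<prec> x\<^sub>b\<close> with
  \<open>a \<in> F \<union> C\<close>. Hence \<open>Q\<^sub>n(x)\<close> is the sum of \<open>x ^ card C\<close> over such pairs \<open>(F, C)\<close>.

  The Hasse diagram of \<open>\<Xi>\<^sub>n\<close> is the path \<open>x\<^sub>1 - x\<^sub>2 - \<dots> - x\<^sub>n\<close>, so this sum is computed by a
  transfer matrix along the path recording whether \<open>x\<^sub>n\<close> lies in \<open>F\<close>, in \<open>C\<close> or in neither.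
  As the orientation of the path alternates from \<open>x\<^sub>2\<close> on, this yields
  \<open>Q (n + 2) = Q (n + 1) + (1 + x) Q n\<close> for \<open>n \<ge> 2\<close>, with \<open>Q 2 = 3 + 2x\<close> and \<open>Q 3 = 4 + 3x\<close>.
  The right-hand side satisfies the same recurrence with the same initial values, its two
  terms being the powers of the roots of \<open>t\<^sup>2 = t + (1 + x)\<close>.
\<close>

section \<open>Induced hypercubes in families of sets\<close>

definition subcube :: "'a set \<Rightarrow> 'a set \<Rightarrow> 'a set set" where
  "subcube F C = (\<lambda>D. F \<union> D) ` Pow C"

lemma inj_on_union_Pow: "F \<inter> C = {} \<Longrightarrow> inj_on (\<lambda>D. F \<union> D) (Pow C)"
  by (auto simp: inj_on_def)

lemma subcube_subset_iff: "subcube F C \<subseteq> A \<longleftrightarrow> (\<forall>D\<subseteq>C. F \<union> D \<in> A)"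
  unfolding subcube_def by blast

lemma Inter_subcube: "\<Inter> (subcube F C) = F"
  unfolding subcube_def by blast

lemma Union_subcube: "\<Union> (subcube F C) = F \<union> C"
  unfolding subcube_def by blast

lemma subcube_inject:
  assumes "F \<inter> C = {}" "F' \<inter> C' = {}" "subcube F C = subcube F' C'"
  shows "F = F' \<and> C = C'"
proof -
  have "F = F'" "F \<union> C = F' \<union> C'"
    using assms(3) Inter_subcube Union_subcube by metis+
  then show ?thesis using assms(1,2) by blast
qed

lemma card_subcube: "F \<inter> C = {} \<Longrightarrow> finite C \<Longrightarrow> card (subcube F C) = 2 ^ card C"
  unfolding subcube_def by (simp add: card_image inj_on_union_Pow card_Pow)

lemma card_sym_diff_1_iff: "card (sym_diff A B) = 1 \<longleftrightarrow> (\<exists>c. sym_diff A B = {c})"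
  by (simp add: card_1_singleton_iff)

lemma sym_diff_singleton_iff:
  "(\<exists>c. sym_diff F G = {c}) \<longleftrightarrow> (\<exists>c\<in>F. G = F - {c}) \<or> (\<exists>c\<in>G. F = G - {c})"
proof
  assume "\<exists>c. sym_diff F G = {c}"
  then obtain c where c: "sym_diff F G = {c}" by blast
  have c: "((y \<in> F) \<noteq> (y \<in> G)) \<longleftrightarrow> y = c" for y
    using c[unfolded set_eq_iff, rule_format, of y] by blast
  show "(\<exists>c\<in>F. G = F - {c}) \<or> (\<exists>c\<in>G. F = G - {c})"
  proof (cases "c \<in> F")
    case True
    then have "G = F - {c}"
      using c by (intro set_eqI) blast
    with True show ?thesis by (intro disjI1 bexI)
  next
    case False
    then have "c \<in> G" using c[of c] by blast
    moreover have "y \<in> F \<longleftrightarrow> y \<in> G - {c}" for y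
      using c[of y] False by (cases "y = c") simp_all
    then have "F = G - {c}" by blast
    ultimately show ?thesis by (intro disjI2 bexI)
  qed
next
  assume "(\<exists>c\<in>F. G = F - {c}) \<or> (\<exists>c\<in>G. F = G - {c})"
  then show "\<exists>c. sym_diff F G = {c}"
  proof (elim disjE bexE)
    fix c assume "c \<in> F" "G = F - {c}"
    then have "sym_diff F G = {c}" by auto
    then show ?thesis ..
  next
    fix c assume "c \<in> G" "F = G - {c}"
    then have "sym_diff F G = {c}" by auto
    then show ?thesis ..
  qed
qed

lemma sym_diff_eqD: "sym_diff M X = D \<Longrightarrow> X = sym_diff M D"
  by blast

lemma sym_diff_disjoint_union: "T \<inter> S = {} \<Longrightarrow> sym_diff M (T \<union> S) = sym_diff (sym_diff M S) T"
  by blast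

lemma sym_diff_image_Pow: "(\<lambda>D. sym_diff M D) ` Pow E = subcube (M - E) E"
  unfolding subcube_def
proof (intro equalityI image_subsetI)
  fix D assume "D \<in> Pow E"
  then show "sym_diff M D \<in> (\<lambda>D. (M - E) \<union> D) ` Pow E"
    by (intro image_eqI[where x = "sym_diff (M \<inter> E) D"]) auto
next
  fix D assume "D \<in> Pow E"
  then show "(M - E) \<union> D \<in> (\<lambda>D. sym_diff M D) ` Pow E"
    by (intro image_eqI[where x = "sym_diff (M \<inter> E) D"]) auto
qed

lemma sym_diff_square_closure:
  assumes "card (sym_diff Y (sym_diff X {a})) = 1" "card (sym_diff Y (sym_diff X {b})) = 1"
    and "a \<noteq> b" "Y \<noteq> X"
  shows "Y = sym_diff X {a, b}"
proof -
  obtain c where c: "sym_diff Y (sym_diff X {a}) = {c}"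
    using assms(1) unfolding card_sym_diff_1_iff by blast
  obtain d where d: "sym_diff Y (sym_diff X {b}) = {d}"
    using assms(2) unfolding card_sym_diff_1_iff by blast
  have ac: "((y \<in> Y) \<noteq> (y \<in> X)) \<longleftrightarrow> ((y = a) \<noteq> (y = c))" for y
    using c by (auto simp: set_eq_iff)
  have bd: "((y \<in> Y) \<noteq> (y \<in> X)) \<longleftrightarrow> ((y = b) \<noteq> (y = d))" for y
    using d by (auto simp: set_eq_iff)
  have "c \<noteq> a"
  proof
    assume "c = a"
    then have "Y = X" using ac by blast
    with assms(4) show False ..
  qed
  then have "c = b" using ac[of a] bd[of a] ac[of b] bd[of b] assms(3) by auto
  then have "y \<in> Y \<longleftrightarrow> y \<in> sym_diff X {a, b}" for y
    using ac[of y] assms(3) by (cases "y \<in> X") auto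
  then show ?thesis by blast
qed

lemma hypercube_isometry_onto_subcube:
  assumes "F \<inter> C = {}" "finite C" "card C = k"
  obtains f where "bij_betw f (Pow {..<k}) (subcube F C)"
    "\<And>A B. A \<subseteq> {..<k} \<Longrightarrow> B \<subseteq> {..<k} \<Longrightarrow> card (sym_diff (f A) (f B)) = card (sym_diff A B)"
proof -
  obtain g where g: "bij_betw g {..<k} C"
    using finite_same_card_bij[of "{..<k}" C] assms(2,3) by auto
  then have g_inj: "inj_on g {..<k}" and g_img: "g ` {..<k} = C"
    by (auto simp: bij_betw_def)
  have "bij_betw ((\<lambda>D. F \<union> D) \<circ> image g) (Pow {..<k}) (subcube F C)"
    unfolding subcube_def
    by (rule bij_betw_trans[OF bij_betw_image_Pow[OF g]])
      (simp add: bij_betw_def inj_on_union_Pow[OF assms(1)])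
  then have bij: "bij_betw (\<lambda>A. F \<union> g ` A) (Pow {..<k}) (subcube F C)"
    by (simp add: comp_def)
  have "card (sym_diff (F \<union> g ` A) (F \<union> g ` B)) = card (sym_diff A B)"
    if AB: "A \<subseteq> {..<k}" "B \<subseteq> {..<k}" for A B
  proof -
    have "sym_diff (F \<union> g ` A) (F \<union> g ` B) = sym_diff (g ` A) (g ` B)"
      using assms(1) AB g_img by blast
    also have "\<dots> = g ` sym_diff A B"
      using AB g_inj by (auto simp: inj_on_def)
    finally show ?thesis
      using AB by (metis card_image inj_on_subset[OF g_inj] Diff_subset le_supI subset_trans)
  qed
  with bij show thesis by (rule that)
qed

lemma hypercube_embedding_eq_sym_diff_step:
  fixes k :: nat
  assumes inj: "inj_on f (Pow {..<k})"
    and adj: "\<And>A B. A \<subseteq> {..<k} \<Longrightarrow> B \<subseteq> {..<k} \<Longrightarrow> card (sym_diff A B) = 1 \<Longrightarrow>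
      card (sym_diff (f A) (f B)) = 1"
    and e_inj: "inj_on e {..<k}"
    and B: "B \<subseteq> {..<k}" and ij: "i \<in> B" "j \<in> B" "i \<noteq> j"
    and IH: "\<And>D. D \<subset> B \<Longrightarrow> f D = sym_diff (f {}) (e ` D)"
  shows "f B = sym_diff (f {}) (e ` B)"
proof -
  define B' where "B' = B - {i, j}"
  define X where "X = sym_diff (f {}) (e ` B')"
  have sub: "B' \<subset> B" "insert i B' \<subset> B" "insert j B' \<subset> B"
    using ij unfolding B'_def by auto
  have fresh: "{e i} \<inter> e ` B' = {}" "{e j} \<inter> e ` B' = {}" "e i \<noteq> e j"
    using B ij inj_on_image_mem_iff[OF e_inj, of _ B'] inj_onD[OF e_inj, of i j]
    unfolding B'_def by auto
  have "f (insert i B') = sym_diff X {e i}" "f (insert j B') = sym_diff X {e j}"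
    using IH[OF sub(2)] IH[OF sub(3)] unfolding X_def
    by (metis sym_diff_disjoint_union[OF fresh(1)] image_insert insert_is_Un,
        metis sym_diff_disjoint_union[OF fresh(2)] image_insert insert_is_Un)
  moreover have "card (sym_diff (f B) (f (insert i B'))) = 1"
    "card (sym_diff (f B) (f (insert j B'))) = 1"
  proof -
    have "sym_diff B (insert i B') = {j}" "sym_diff B (insert j B') = {i}"
      using ij unfolding B'_def by auto
    moreover have "insert i B' \<subseteq> {..<k}" "insert j B' \<subseteq> {..<k}"
      using sub B by auto
    ultimately show "card (sym_diff (f B) (f (insert i B'))) = 1"
      "card (sym_diff (f B) (f (insert j B'))) = 1"
      by (intro adj[OF B]; simp)+
  qed
  moreover have "f B \<noteq> X"
    using IH[OF sub(1)] inj_onD[OF inj, of B B'] B sub(1)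
    unfolding X_def by auto
  ultimately have "f B = sym_diff X {e i, e j}"
    using fresh(3) by (intro sym_diff_square_closure) simp_all
  also have "\<dots> = sym_diff (f {}) ({e i, e j} \<union> e ` B')"
    unfolding X_def using fresh by (intro sym_diff_disjoint_union[symmetric]) blast
  also have "{e i, e j} \<union> e ` B' = e ` B"
    using ij unfolding B'_def by blast
  finally show ?thesis .
qed

lemma hypercube_embedding_eq_sym_diff:
  fixes k :: nat
  assumes inj: "inj_on f (Pow {..<k})"
    and adj: "\<And>A B. A \<subseteq> {..<k} \<Longrightarrow> B \<subseteq> {..<k} \<Longrightarrow> card (sym_diff A B) = 1 \<Longrightarrow>
      card (sym_diff (f A) (f B)) = 1"
    and e: "\<And>i. i < k \<Longrightarrow> f {i} = sym_diff (f {}) {e i}" and e_inj: "inj_on e {..<k}"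
    and B: "B \<subseteq> {..<k}"
  shows "f B = sym_diff (f {}) (e ` B)"
proof -
  have "finite B" by (rule finite_subset[OF B]) simp
  then show ?thesis using B
  proof (induction B rule: finite_psubset_induct)
    case (psubset B)
    consider "B = {}" | i where "B = {i}" | i j where "i \<in> B" "j \<in> B" "i \<noteq> j"
      by (metis insertI1 subsetI subset_singletonD)
    then show ?case
    proof cases
      case (3 i j)
      show ?thesis
      proof (rule hypercube_embedding_eq_sym_diff_step[OF inj adj e_inj psubset.prems 3])
        fix D assume "D \<subset> B"
        then show "f D = sym_diff (f {}) (e ` D)"
          using psubset.IH psubset.prems by auto
      qed
    qed (use e psubset.prems in auto)
  qed
qed

lemma hypercube_embedding_image_subcube:
  fixes k :: nat
  assumes inj: "inj_on f (Pow {..<k})"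
    and adj: "\<And>A B. A \<subseteq> {..<k} \<Longrightarrow> B \<subseteq> {..<k} \<Longrightarrow> card (sym_diff A B) = 1 \<Longrightarrow>
      card (sym_diff (f A) (f B)) = 1"
  obtains F C where "F \<inter> C = {}" "finite C" "card C = k" "f ` Pow {..<k} = subcube F C"
proof -
  have "\<exists>c. sym_diff (f {}) (f {i}) = {c}" if "i < k" for i
  proof -
    have "card (sym_diff (f {}) (f {i})) = 1"
      using that by (intro adj) auto
    then show ?thesis unfolding card_sym_diff_1_iff .
  qed
  then obtain e where e: "\<And>i. i < k \<Longrightarrow> sym_diff (f {}) (f {i}) = {e i}"
    by metis
  have f_single: "f {i} = sym_diff (f {}) {e i}" if "i < k" for i
    using e[OF that] by (rule sym_diff_eqD)
  have e_inj: "inj_on e {..<k}"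
  proof (rule inj_onI)
    fix i j assume ij: "i \<in> {..<k}" "j \<in> {..<k}" and "e i = e j"
    then have "f {i} = f {j}" using f_single by simp
    then have "{i} = {j}" by (rule inj_onD[OF inj]) (use ij in auto)
    then show "i = j" by simp
  qed
  define E where "E = e ` {..<k}"
  have "f ` Pow {..<k} = (\<lambda>B. sym_diff (f {}) (e ` B)) ` Pow {..<k}"
    by (rule image_cong[OF refl], rule hypercube_embedding_eq_sym_diff[OF inj adj f_single e_inj])
      auto
  also have "\<dots> = (\<lambda>D. sym_diff (f {}) D) ` Pow E"
    unfolding E_def image_Pow_surj[OF refl, of e "{..<k}", symmetric] image_image ..
  also have "\<dots> = subcube (f {} - E) E"
    by (rule sym_diff_image_Pow)
  finally show thesis
    using e_inj by (intro that[of "f {} - E" E]) (auto simp: E_def card_image)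
qed

section \<open>Induced hypercubes of the matchable Lucas cube\<close>

lemma xi_cover_range: "xi_cover n a b \<Longrightarrow> a \<in> {1..n} \<and> b \<in> {1..n} \<and> a \<noteq> b"
  unfolding xi_cover_def by auto

lemma xi_filters_iff_covers:
  "F \<in> xi_filters n \<longleftrightarrow> F \<subseteq> {1..n} \<and> (\<forall>a b. xi_cover n a b \<longrightarrow> a \<in> F \<longrightarrow> b \<in> F)"
proof
  assume "F \<in> xi_filters n"
  moreover have "xi_le n a b" if "xi_cover n a b" for a b
    using xi_cover_range[OF that] that unfolding xi_le_def by auto
  ultimately show "F \<subseteq> {1..n} \<and> (\<forall>a b. xi_cover n a b \<longrightarrow> a \<in> F \<longrightarrow> b \<in> F)"
    unfolding xi_filters_def by blast
next
  assume F: "F \<subseteq> {1..n} \<and> (\<forall>a b. xi_cover n a b \<longrightarrow> a \<in> F \<longrightarrow> b \<in> F)"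
  have "b \<in> F" if "(xi_cover n)\<^sup>*\<^sup>* a b" "a \<in> F" for a b
    using that by (induction rule: rtranclp_induct) (use F in auto)
  with F show "F \<in> xi_filters n"
    unfolding xi_filters_def xi_le_def by blast
qed

definition cube_pair :: "nat \<Rightarrow> nat set \<Rightarrow> nat set \<Rightarrow> bool" where
  "cube_pair n F C \<longleftrightarrow> F \<subseteq> {1..n} \<and> C \<subseteq> {1..n} \<and> F \<inter> C = {} \<and>
     (\<forall>a b. xi_cover n a b \<longrightarrow> a \<in> F \<union> C \<longrightarrow> b \<in> F)"

definition cube_pairs :: "nat \<Rightarrow> (nat set \<times> nat set) set" where
  "cube_pairs n = {(F, C). cube_pair n F C}"

lemma cube_pair_iff_subcube:
  "cube_pair n F C \<longleftrightarrow> F \<inter> C = {} \<and> subcube F C \<subseteq> xi_filters n"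
  unfolding subcube_subset_iff
proof
  assume "cube_pair n F C"
  then show "F \<inter> C = {} \<and> (\<forall>D\<subseteq>C. F \<union> D \<in> xi_filters n)"
    unfolding cube_pair_def xi_filters_iff_covers by blast
next
  assume *: "F \<inter> C = {} \<and> (\<forall>D\<subseteq>C. F \<union> D \<in> xi_filters n)"
  then have F: "F \<in> xi_filters n" and FC: "F \<union> C \<in> xi_filters n"
    and Fa: "\<And>a. a \<in> C \<Longrightarrow> F \<union> {a} \<in> xi_filters n"
    by (metis Un_empty_right empty_subsetI, blast, blast)
  have "b \<in> F" if ab: "xi_cover n a b" "a \<in> F \<union> C" for a b
  proof (cases "a \<in> F")
    case True
    then show ?thesis using F ab(1) unfolding xi_filters_iff_covers by blast
  next
    case False
    then have "b \<in> F \<union> {a}"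
      using Fa[of a] ab unfolding xi_filters_iff_covers by blast
    then show ?thesis using xi_cover_range[OF ab(1)] by blast
  qed
  then show "cube_pair n F C"
    using * FC unfolding cube_pair_def xi_filters_iff_covers by blast
qed

lemma omega_adj_iff:
  "omega_adj n F G \<longleftrightarrow> F \<in> xi_filters n \<and> G \<in> xi_filters n \<and> card (sym_diff F G) = 1"
  unfolding omega_adj_def card_sym_diff_1_iff sym_diff_singleton_iff ..

lemma cube_pair_finite: "cube_pair n F C \<Longrightarrow> finite C"
  unfolding cube_pair_def using finite_subset by blast

lemma induces_cube_iff:
  "induces_cube n k S \<longleftrightarrow> (\<exists>F C. cube_pair n F C \<and> card C = k \<and> S = subcube F C)"
proof
  assume "induces_cube n k S"
  then obtain f where S: "S \<subseteq> xi_filters n" and f: "bij_betw f (Pow {..<k}) S"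
    and adj: "\<And>A B. A \<subseteq> {..<k} \<Longrightarrow> B \<subseteq> {..<k} \<Longrightarrow>
      omega_adj n (f A) (f B) \<longleftrightarrow> card (sym_diff A B) = 1"
    unfolding induces_cube_def by auto
  obtain F C where "F \<inter> C = {}" "card C = k" "f ` Pow {..<k} = subcube F C"
  proof (rule hypercube_embedding_image_subcube)
    show "inj_on f (Pow {..<k})" using f by (rule bij_betw_imp_inj_on)
    show "card (sym_diff (f A) (f B)) = 1"
      if "A \<subseteq> {..<k}" "B \<subseteq> {..<k}" "card (sym_diff A B) = 1" for A B
      using adj[OF that(1,2)] that(3) unfolding omega_adj_iff by blast
  qed
  moreover have "f ` Pow {..<k} = S" using f by (rule bij_betw_imp_surj_on)
  ultimately show "\<exists>F C. cube_pair n F C \<and> card C = k \<and> S = subcube F C"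
    using S unfolding cube_pair_iff_subcube by auto
next
  assume "\<exists>F C. cube_pair n F C \<and> card C = k \<and> S = subcube F C"
  then obtain F C where FC: "cube_pair n F C" "card C = k" and S: "S = subcube F C"
    by blast
  then have disj: "F \<inter> C = {}" and S_filters: "S \<subseteq> xi_filters n"
    unfolding cube_pair_iff_subcube by auto
  obtain f where f: "bij_betw f (Pow {..<k}) S"
    and card_f: "\<And>A B. A \<subseteq> {..<k} \<Longrightarrow> B \<subseteq> {..<k} \<Longrightarrow>
      card (sym_diff (f A) (f B)) = card (sym_diff A B)"
    using hypercube_isometry_onto_subcube[OF disj cube_pair_finite[OF FC(1)] FC(2)] unfolding S by metis
  have "f A \<in> xi_filters n" if "A \<subseteq> {..<k}" for A
    using bij_betw_apply[OF f] that S_filters by blast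
  then show "induces_cube n k S"
    unfolding induces_cube_def omega_adj_iff using S_filters f card_f by auto
qed

lemma finite_cube_pairs: "finite (cube_pairs n)"
proof (rule finite_subset)
  show "cube_pairs n \<subseteq> Pow {1..n} \<times> Pow {1..n}"
    unfolding cube_pairs_def cube_pair_def by blast
qed simp

lemma q_count_eq_card_cube_pairs: "q_count n k = card {p \<in> cube_pairs n. card (snd p) = k}"
proof -
  have "{S. induces_cube n k S} = (\<lambda>(F, C). subcube F C) ` {p \<in> cube_pairs n. card (snd p) = k}"
    unfolding induces_cube_iff cube_pairs_def by fastforce
  moreover have "inj_on (\<lambda>(F, C). subcube F C) (cube_pairs n)"
    unfolding cube_pairs_def cube_pair_def by (auto intro!: inj_onI dest: subcube_inject)
  ultimately show ?thesis
    unfolding q_count_def by (metis (no_types, lifting) card_image inj_on_subset mem_Collect_eq subsetI)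
qed

lemma cube_pair_card_le:
  assumes "cube_pair n F C" shows "card C \<le> card (xi_filters n)"
proof -
  have "card C < 2 ^ card C" by (rule less_exp)
  also have "\<dots> = card (subcube F C)"
    using assms cube_pair_finite by (simp add: card_subcube cube_pair_def)
  also have "\<dots> \<le> card (xi_filters n)"
    using assms unfolding cube_pair_iff_subcube
    by (intro card_mono) (auto simp: xi_filters_def intro: finite_subset)
  finally show ?thesis by simp
qed

lemma cube_poly_eq_sum: "cube_poly n x = (\<Sum>p\<in>cube_pairs n. x ^ card (snd p))"
proof -
  have layer: "(\<Sum>p | p \<in> cube_pairs n \<and> card (snd p) = k. x ^ card (snd p)) =
      of_nat (q_count n k) * x ^ k" for k
  proof -
    have "(\<Sum>p | p \<in> cube_pairs n \<and> card (snd p) = k. x ^ card (snd p))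
        = (\<Sum>p | p \<in> cube_pairs n \<and> card (snd p) = k. x ^ k)"
      by (rule sum.cong) auto
    then show ?thesis unfolding q_count_eq_card_cube_pairs by simp
  qed
  have "(\<Sum>p\<in>cube_pairs n. x ^ card (snd p))
      = (\<Sum>k\<le>card (xi_filters n). \<Sum>p | p \<in> cube_pairs n \<and> card (snd p) = k. x ^ card (snd p))"
    by (rule sum.group[symmetric, OF finite_cube_pairs])
      (auto simp: cube_pairs_def cube_pair_card_le)
  then show ?thesis unfolding cube_poly_def layer by simp
qed

section \<open>A transfer recursion along the Hasse diagram\<close>

definition xi_ascending :: "nat \<Rightarrow> bool" where
  "xi_ascending i \<longleftrightarrow> odd i \<and> 3 \<le> i"

definition path_edge :: "nat \<Rightarrow> nat \<Rightarrow> nat \<Rightarrow> bool" where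
  "path_edge i a b \<longleftrightarrow> (if xi_ascending i then a = i \<and> b = Suc i else a = Suc i \<and> b = i)"

lemma xi_cover_iff_path_edge:
  "xi_cover n a b \<longleftrightarrow> (\<exists>i. 1 \<le> i \<and> i < n \<and> path_edge i a b)"
proof
  assume "xi_cover n a b"
  then consider "n \<ge> 2" "a = 2" "b = 1" | "n \<ge> 3" "a = 3" "b = 2"
    | i where "3 \<le> i" "i \<le> n - 1" "(odd i \<and> a = i \<and> b = Suc i) \<or> (even i \<and> a = Suc i \<and> b = i)"
    unfolding xi_cover_def by blast
  then show "\<exists>i. 1 \<le> i \<and> i < n \<and> path_edge i a b"
  proof cases
    case 1
    then show ?thesis by (intro exI[of _ 1]) (auto simp: path_edge_def xi_ascending_def)
  next
    case 2
    then show ?thesis by (intro exI[of _ 2]) (auto simp: path_edge_def xi_ascending_def)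
  next
    case (3 i)
    then show ?thesis by (intro exI[of _ i]) (auto simp: path_edge_def xi_ascending_def)
  qed
next
  assume "\<exists>i. 1 \<le> i \<and> i < n \<and> path_edge i a b"
  then obtain i where i: "1 \<le> i" "i < n" "path_edge i a b" by blast
  consider "i = 1" | "i = 2" | "3 \<le> i" using i(1) by linarith
  then show "xi_cover n a b"
  proof cases
    case 1
    then show ?thesis using i unfolding xi_cover_def path_edge_def xi_ascending_def by auto
  next
    case 2
    then show ?thesis using i unfolding xi_cover_def path_edge_def xi_ascending_def by auto
  next
    case 3
    then show ?thesis using i unfolding xi_cover_def path_edge_def xi_ascending_def
      by (intro disjI2 exI[of _ i]) (auto split: if_splits)
  qed
qed

lemma xi_cover_Suc:
  "xi_cover (Suc n) a b \<longleftrightarrow> xi_cover n a b \<or> (1 \<le> n \<and> path_edge n a b)"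
  unfolding xi_cover_iff_path_edge less_Suc_eq by blast

datatype role = Absent | Fixed | Free

definition role_of :: "nat \<Rightarrow> nat set \<times> nat set \<Rightarrow> role" where
  "role_of a p = (if a \<in> fst p then Fixed else if a \<in> snd p then Free else Absent)"

fun extend_pair :: "nat \<Rightarrow> role \<Rightarrow> nat set \<times> nat set \<Rightarrow> nat set \<times> nat set" where
  "extend_pair a Absent (F, C) = (F, C)"
| "extend_pair a Fixed (F, C) = (insert a F, C)"
| "extend_pair a Free (F, C) = (F, insert a C)"

definition compatible_roles :: "role \<Rightarrow> role \<Rightarrow> bool" where
  "compatible_roles r s \<longleftrightarrow> (r \<noteq> Absent \<longrightarrow> s = Fixed)"

definition edge_ok :: "nat \<Rightarrow> role \<Rightarrow> role \<Rightarrow> bool" where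
  "edge_ok i r s \<longleftrightarrow> (if xi_ascending i then compatible_roles r s else compatible_roles s r)"

lemma cube_pair_iff_roles:
  "cube_pair n F C \<longleftrightarrow> F \<subseteq> {1..n} \<and> C \<subseteq> {1..n} \<and> F \<inter> C = {} \<and>
     (\<forall>a b. xi_cover n a b \<longrightarrow> compatible_roles (role_of a (F, C)) (role_of b (F, C)))"
  unfolding cube_pair_def compatible_roles_def role_of_def by auto

lemma role_of_extend_pair:
  "a \<notin> F \<Longrightarrow> a \<notin> C \<Longrightarrow>
    role_of b (extend_pair a r (F, C)) = (if b = a then r else role_of b (F, C))"
  by (cases r) (auto simp: role_of_def)

lemma all_path_edge_iff_edge_ok:
  "(\<forall>a b. path_edge i a b \<longrightarrow> compatible_roles (\<rho> a) (\<rho> b)) \<longleftrightarrow> edge_ok i (\<rho> i) (\<rho> (Suc i))"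
  unfolding path_edge_def edge_ok_def by auto

lemma extend_pair_in_cube_pairs_iff:
  assumes "F \<subseteq> {1..n}" "C \<subseteq> {1..n}" "F \<inter> C = {}"
  shows "extend_pair (Suc n) r (F, C) \<in> cube_pairs (Suc n) \<longleftrightarrow>
    cube_pair n F C \<and> (1 \<le> n \<longrightarrow> edge_ok n (role_of n (F, C)) r)"
proof -
  obtain F' C' where FC': "extend_pair (Suc n) r (F, C) = (F', C')"
    by (cases "extend_pair (Suc n) r (F, C)")
  define \<rho> where "\<rho> b = role_of b (F', C')" for b
  have fresh: "Suc n \<notin> F" "Suc n \<notin> C" using assms by auto
  then have \<rho>: "\<rho> b = (if b = Suc n then r else role_of b (F, C))" for b
    unfolding \<rho>_def FC'[symmetric] by (rule role_of_extend_pair)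
  have range: "F' \<subseteq> {1..Suc n}" "C' \<subseteq> {1..Suc n}" "F' \<inter> C' = {}"
    using assms fresh FC' by (cases r; auto)+
  have "(F', C') \<in> cube_pairs (Suc n) \<longleftrightarrow>
      (\<forall>a b. xi_cover n a b \<longrightarrow> compatible_roles (\<rho> a) (\<rho> b)) \<and>
      (1 \<le> n \<longrightarrow> (\<forall>a b. path_edge n a b \<longrightarrow> compatible_roles (\<rho> a) (\<rho> b)))"
    unfolding cube_pairs_def mem_Collect_eq case_prod_conv cube_pair_iff_roles xi_cover_Suc \<rho>_def
    using range by blast
  also have "(\<forall>a b. xi_cover n a b \<longrightarrow> compatible_roles (\<rho> a) (\<rho> b)) \<longleftrightarrow>
      (\<forall>a b. xi_cover n a b \<longrightarrow> compatible_roles (role_of a (F, C)) (role_of b (F, C)))"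
    using xi_cover_range unfolding \<rho> by fastforce
  finally show ?thesis
    unfolding FC' all_path_edge_iff_edge_ok cube_pair_iff_roles \<rho> using assms by simp
qed

lemma extend_pair_restrict:
  "F \<inter> C = {} \<Longrightarrow> extend_pair a (role_of a (F, C)) (F - {a}, C - {a}) = (F, C)"
  by (auto simp: role_of_def insert_absorb)

lemma restrict_extend_pair:
  "a \<notin> fst q \<Longrightarrow> a \<notin> snd q \<Longrightarrow>
    (fst (extend_pair a r q) - {a}, snd (extend_pair a r q) - {a}) = q"
  by (cases q; cases r) auto

lemma card_snd_extend_pair:
  "a \<notin> snd q \<Longrightarrow> finite (snd q) \<Longrightarrow>
    card (snd (extend_pair a r q)) = card (snd q) + (if r = Free then 1 else 0)"
  by (cases q; cases r) auto

lemma cube_pairs_Suc_role: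
  "{p \<in> cube_pairs (Suc n). role_of (Suc n) p = r} =
   extend_pair (Suc n) r ` {q \<in> cube_pairs n. 1 \<le> n \<longrightarrow> edge_ok n (role_of n q) r}"
proof (intro equalityI subsetI)
  fix p assume "p \<in> {p \<in> cube_pairs (Suc n). role_of (Suc n) p = r}"
  then obtain F C where p: "p = (F, C)" "cube_pair (Suc n) F C" and r: "r = role_of (Suc n) (F, C)"
    unfolding cube_pairs_def by auto
  then have FC: "F - {Suc n} \<subseteq> {1..n}" "C - {Suc n} \<subseteq> {1..n}" "(F - {Suc n}) \<inter> (C - {Suc n}) = {}"
    and disj: "F \<inter> C = {}"
    unfolding cube_pair_def by auto
  have ext: "extend_pair (Suc n) r (F - {Suc n}, C - {Suc n}) = p"
    unfolding p r using disj by (rule extend_pair_restrict)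
  have "role_of n (F - {Suc n}, C - {Suc n}) = role_of n (F, C)"
    by (simp add: role_of_def)
  then show "p \<in> extend_pair (Suc n) r ` {q \<in> cube_pairs n. 1 \<le> n \<longrightarrow> edge_ok n (role_of n q) r}"
    using extend_pair_in_cube_pairs_iff[OF FC, of r] ext p
    by (intro rev_image_eqI[where x = "(F - {Suc n}, C - {Suc n})"]) (auto simp: cube_pairs_def)
next
  fix p assume "p \<in> extend_pair (Suc n) r ` {q \<in> cube_pairs n. 1 \<le> n \<longrightarrow> edge_ok n (role_of n q) r}"
  then obtain F C where FC: "cube_pair n F C" "1 \<le> n \<longrightarrow> edge_ok n (role_of n (F, C)) r"
    and p: "p = extend_pair (Suc n) r (F, C)"
    unfolding cube_pairs_def by auto
  then have range: "F \<subseteq> {1..n}" "C \<subseteq> {1..n}" "F \<inter> C = {}"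
    unfolding cube_pair_def by auto
  then have "Suc n \<notin> F" "Suc n \<notin> C" by auto
  with range show "p \<in> {p \<in> cube_pairs (Suc n). role_of (Suc n) p = r}"
    using extend_pair_in_cube_pairs_iff[of F n C r] FC role_of_extend_pair[of "Suc n" F C "Suc n" r]
    unfolding p by auto
qed

definition role_sum :: "nat \<Rightarrow> complex \<Rightarrow> role \<Rightarrow> complex" where
  "role_sum n x r = (\<Sum>p | p \<in> cube_pairs n \<and> role_of n p = r. x ^ card (snd p))"

lemma role_sum_Suc:
  "role_sum (Suc n) x r = (if r = Free then x else 1) *
     (\<Sum>q | q \<in> cube_pairs n \<and> (1 \<le> n \<longrightarrow> edge_ok n (role_of n q) r). x ^ card (snd q))"
proof -
  let ?Q = "{q \<in> cube_pairs n. 1 \<le> n \<longrightarrow> edge_ok n (role_of n q) r}"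
  have fresh: "Suc n \<notin> fst q" "Suc n \<notin> snd q" "finite (snd q)" if "q \<in> ?Q" for q
    using that cube_pair_finite unfolding cube_pairs_def cube_pair_def by auto
  have "inj_on (extend_pair (Suc n) r) ?Q"
  proof (rule inj_onI)
    fix q q' assume q: "q \<in> ?Q" and q': "q' \<in> ?Q"
      and eq: "extend_pair (Suc n) r q = extend_pair (Suc n) r q'"
    have "q = (fst (extend_pair (Suc n) r q) - {Suc n}, snd (extend_pair (Suc n) r q) - {Suc n})"
      by (rule restrict_extend_pair[OF fresh(1,2)[OF q], symmetric])
    also have "\<dots> = q'"
      unfolding eq by (rule restrict_extend_pair[OF fresh(1,2)[OF q']])
    finally show "q = q'" .
  qed
  then have "role_sum (Suc n) x r = (\<Sum>q\<in>?Q. x ^ card (snd (extend_pair (Suc n) r q)))"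
    unfolding role_sum_def cube_pairs_Suc_role[of n r, simplified] by (simp add: sum.reindex)
  also have "\<dots> = (\<Sum>q\<in>?Q. (if r = Free then x else 1) * x ^ card (snd q))"
    using fresh by (intro sum.cong refl) (simp add: card_snd_extend_pair)
  finally show ?thesis by (simp add: sum_distrib_left)
qed

lemma cube_poly_eq_role_sums:
  "cube_poly n x = role_sum n x Absent + role_sum n x Fixed + role_sum n x Free"
proof -
  have "cube_poly n x = (\<Sum>r\<in>{Absent, Fixed, Free}. role_sum n x r)"
    unfolding cube_poly_eq_sum role_sum_def
  proof (rule sum.group[symmetric, OF finite_cube_pairs])
    show "role_of n ` cube_pairs n \<subseteq> {Absent, Fixed, Free}"
      by (auto simp: role_of_def)
  qed simp
  then show ?thesis by (simp add: add.assoc)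
qed

lemma role_sums_Suc_ascending:
  assumes "1 \<le> n" "xi_ascending n"
  shows "role_sum (Suc n) x Absent = role_sum n x Absent"
    "role_sum (Suc n) x Fixed = cube_poly n x"
    "role_sum (Suc n) x Free = x * role_sum n x Absent"
  unfolding role_sum_Suc using assms
  by (simp_all add: edge_ok_def compatible_roles_def role_sum_def cube_poly_eq_sum)

lemma role_sums_Suc_descending:
  assumes "1 \<le> n" "\<not> xi_ascending n"
  shows "role_sum (Suc n) x Absent = cube_poly n x"
    "role_sum (Suc n) x Fixed = role_sum n x Fixed"
    "role_sum (Suc n) x Free = x * role_sum n x Fixed"
  unfolding role_sum_Suc using assms
  by (simp_all add: edge_ok_def compatible_roles_def role_sum_def cube_poly_eq_sum)

lemma cube_pairs_0: "cube_pairs 0 = {({}, {})}"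
  unfolding cube_pairs_def cube_pair_def by auto

lemma role_sum_1: "role_sum 1 x r = (if r = Free then x else 1)"
  using role_sum_Suc[of 0 x r] by (simp add: cube_pairs_0)

text \<open>The pairs whose role at \<open>n\<close> puts no constraint on the role of \<open>n + 1\<close>.\<close>
definition open_sum :: "nat \<Rightarrow> complex \<Rightarrow> complex" where
  "open_sum n x = role_sum n x (if xi_ascending n then Absent else Fixed)"

lemma cube_poly_Suc:
  assumes "1 \<le> n"
  shows "cube_poly (Suc n) x = cube_poly n x + (1 + x) * open_sum n x"
proof (cases "xi_ascending n")
  case True
  then show ?thesis
    using role_sums_Suc_ascending[OF assms True]
    unfolding cube_poly_eq_role_sums[of "Suc n"] open_sum_def by (simp add: algebra_simps)
next
  case False
  then show ?thesis
    using role_sums_Suc_descending[OF assms False] cube_poly_eq_role_sums[of n]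
    unfolding cube_poly_eq_role_sums[of "Suc n"] open_sum_def by (simp add: algebra_simps)
qed

lemma open_sum_Suc:
  assumes "2 \<le> n"
  shows "open_sum (Suc n) x = cube_poly n x"
proof (cases "xi_ascending n")
  case True
  then have "\<not> xi_ascending (Suc n)" by (simp add: xi_ascending_def)
  then show ?thesis
    using role_sums_Suc_ascending[OF _ True] assms unfolding open_sum_def by simp
next
  case False
  then have "xi_ascending (Suc n)" using assms unfolding xi_ascending_def by presburger
  then show ?thesis
    using role_sums_Suc_descending[OF _ False] assms unfolding open_sum_def by simp
qed

lemma cube_poly_Suc_Suc:
  "2 \<le> n \<Longrightarrow> cube_poly (Suc (Suc n)) x = cube_poly (Suc n) x + (1 + x) * cube_poly n x"
  using cube_poly_Suc[of "Suc n" x] open_sum_Suc[of n x] by simp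

lemma cube_poly_2: "cube_poly 2 x = 3 + 2 * x"
  and cube_poly_3: "cube_poly 3 x = 4 + 3 * x"
proof -
  have not_asc: "\<not> xi_ascending 1" "\<not> xi_ascending 2" by (simp_all add: xi_ascending_def)
  have "cube_poly 1 x = 2 + x" "open_sum 1 x = 1"
    unfolding cube_poly_eq_role_sums open_sum_def role_sum_1 using not_asc by simp_all
  moreover have "open_sum 2 x = 1"
    using role_sums_Suc_descending(2)[of 1 x] not_asc
    unfolding open_sum_def numeral_2_eq_2 by (simp add: role_sum_1[unfolded One_nat_def])
  ultimately show "cube_poly 2 x = 3 + 2 * x" "cube_poly 3 x = 4 + 3 * x"
    using cube_poly_Suc[of 1 x] cube_poly_Suc[of 2 x]
    by (simp_all add: numeral_2_eq_2 numeral_3_eq_3 algebra_simps)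
qed

section \<open>Solving the recursion\<close>

lemma power_sum_recurrence:
  fixes a b c :: "'a::comm_semiring_1"
  assumes "a\<^sup>2 = a + c" "b\<^sup>2 = b + c"
  shows "a ^ Suc (Suc n) + b ^ Suc (Suc n) = (a ^ Suc n + b ^ Suc n) + c * (a ^ n + b ^ n)"
proof -
  have "y ^ Suc (Suc n) = y ^ n * y\<^sup>2" for y :: 'a
    by (simp add: power2_eq_square mult_ac)
  then show ?thesis
    using assms by (simp add: algebra_simps)
qed

lemma quadratic_roots_half:
  fixes s c :: "'a::field_char_0"
  assumes "s\<^sup>2 = 1 + 4 * c"
  shows "((1 + s) / 2)\<^sup>2 = (1 + s) / 2 + c" "((1 - s) / 2)\<^sup>2 = (1 - s) / 2 + c"
proof -
  have "((1 + s) / 2)\<^sup>2 = (1 + 2 * s + s\<^sup>2) / 4" "((1 - s) / 2)\<^sup>2 = (1 - 2 * s + s\<^sup>2) / 4"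
    by (simp_all add: power2_eq_square field_simps)
  then show "((1 + s) / 2)\<^sup>2 = (1 + s) / 2 + c" "((1 - s) / 2)\<^sup>2 = (1 - s) / 2 + c"
    unfolding assms by (simp_all add: field_simps)
qed

lemma linear_recurrence_eq:
  fixes f g :: "nat \<Rightarrow> 'a::{plus, times}"
  assumes f: "\<And>k. m \<le> k \<Longrightarrow> f (Suc (Suc k)) = f (Suc k) + c * f k"
    and g: "\<And>k. m \<le> k \<Longrightarrow> g (Suc (Suc k)) = g (Suc k) + c * g k"
    and "f m = g m" "f (Suc m) = g (Suc m)" "m \<le> n"
  shows "f n = g n"
  using \<open>m \<le> n\<close>
proof (induction n rule: less_induct)
  case (less n)
  consider "n = m" | "n = Suc m" | "m + 2 \<le> n"
    using less.prems by linarith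
  then show ?case
  proof cases
    case 3
    define k where "k = n - 2"
    have "n = Suc (Suc k)" "m \<le> k" using 3 unfolding k_def by arith+
    then show ?thesis using f g less.IH by simp
  qed (use assms in simp_all)
qed

theorem mainTheorem8:
  fixes n :: nat and x :: complex
  assumes "n \<ge> 2"
  shows "cube_poly n x =
    ((1 + csqrt (5 + 4 * x)) / 2) ^ n + ((1 - csqrt (5 + 4 * x)) / 2) ^ n"
proof -
  define s where "s = csqrt (5 + 4 * x)"
  define L where "L k = ((1 + s) / 2) ^ k + ((1 - s) / 2) ^ k" for k
  have "s\<^sup>2 = 1 + 4 * (1 + x)"
    unfolding s_def by simp
  then have L_rec: "L (Suc (Suc k)) = L (Suc k) + (1 + x) * L k" for k
    unfolding L_def by (intro power_sum_recurrence quadratic_roots_half)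
  have "L 0 = 2" "L 1 = 1"
    unfolding L_def by (simp_all add: field_simps)
  then have "L 2 = 3 + 2 * x" "L 3 = 4 + 3 * x"
    using L_rec[of 0] L_rec[of 1] by (simp_all add: numeral_2_eq_2 numeral_3_eq_3 algebra_simps)
  have "cube_poly n x = L n"
  proof (rule linear_recurrence_eq[where m = 2 and c = "1 + x"])
    show "cube_poly 2 x = L 2" "cube_poly (Suc 2) x = L (Suc 2)"
      using \<open>L 2 = 3 + 2 * x\<close> \<open>L 3 = 4 + 3 * x\<close> by (simp_all add: cube_poly_2 cube_poly_3)
  qed (use assms cube_poly_Suc_Suc L_rec in auto)
  then show ?thesis
    unfolding L_def s_def .
qed

end
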